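(* Let $f$, $X_n$, $Y_m$ be as in the context. If $n\geq 2$ and $m<n$, then every map $VX_n\to VY_m$ has some fibre containing at least $f(n)$ vertices; in particular there is no coarse $(f(n)-1)$-wiring of $X_n$ into $Y_m$.
   Context: Fix a function $f:\mathbb{N}\to\mathbb{N}$ (with $\mathbb{N}=\{1,2,\dots\}$) that is surjective, satisfies $f(1)=1$, $2\leq f(n)\leq n$ for all $n\geq 2$, and $|f^{-1}(k)|=\infty$ for every $k\geq 2$. For $n\in\mathbb{N}$ let $X_n$ be the graph with vertex set $\{0,1,\dots,f(n)-1\}\times\{0,1,\dots,2^{2^{2n}}f(n)\}$, with edges $(i,j)(i,j+1)$ for all $0\leq i\leq f(n)-1$, $0\leq j\leq 2^{2^{2n}}f(n)-1$, and $(i,j)(i+1,j)$ for all $0\leq i\leq f(n)-2$ and all $j$ that are multiples of $2^{2^{2n}}$. Let $Y_n$ be defined in the same way with $2^{2^{2n}}$ replaced everywhere by $2^{2^{2n+1}}$. A coarse $k$-wiring of a finite graph $\Gamma$ into a graph $Y$ is a continuous map sending vertices to vertices and edges onto unions of edges, such that each vertex of $Y$ has at most $k$ preimage vertices and each edge of $Y$ lies in the images of at most $k$ edges of $\Gamma$. *)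

theory Defs
  imports Main
begin

text \<open>Finite graphs are given by a vertex set V and an edge set E of
  two-element subsets of V.\<close>

definition ladderV :: "nat \<Rightarrow> nat \<Rightarrow> (nat \<times> nat) set" where
  "ladderV c s = {0..<c} \<times> {0..s * c}"

definition ladderE :: "nat \<Rightarrow> nat \<Rightarrow> (nat \<times> nat) set set" where
  "ladderE c s =
     {{(i, j), (i, j + 1)} | i j. i < c \<and> j < s * c}
   \<union> {{(i, j), (i + 1, j)} | i j. i + 1 < c \<and> j \<le> s * c \<and> s dvd j}"

definition XV :: "(nat \<Rightarrow> nat) \<Rightarrow> nat \<Rightarrow> (nat \<times> nat) set" where
  "XV f n = ladderV (f n) (2 ^ (2 ^ (2 * n)))"
definition XE :: "(nat \<Rightarrow> nat) \<Rightarrow> nat \<Rightarrow> (nat \<times> nat) set set" where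
  "XE f n = ladderE (f n) (2 ^ (2 ^ (2 * n)))"
definition YV :: "(nat \<Rightarrow> nat) \<Rightarrow> nat \<Rightarrow> (nat \<times> nat) set" where
  "YV f n = ladderV (f n) (2 ^ (2 ^ (2 * n + 1)))"
definition YE :: "(nat \<Rightarrow> nat) \<Rightarrow> nat \<Rightarrow> (nat \<times> nat) set set" where
  "YE f n = ladderE (f n) (2 ^ (2 ^ (2 * n + 1)))"

text \<open>A walk in (V,E): a vertex list of length at least 2 (so the image of an
  edge is a nonempty union of edges) with consecutive vertices adjacent.\<close>

definition is_walk :: "'b set \<Rightarrow> 'b set set \<Rightarrow> 'b list \<Rightarrow> bool" where
  "is_walk V E p \<longleftrightarrow> 2 \<le> length p \<and> set p \<subseteq> V \<and>
     (\<forall>i. Suc i < length p \<longrightarrow> {p ! i, p ! Suc i} \<in> E)"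

definition walk_edges :: "'b list \<Rightarrow> 'b set set" where
  "walk_edges p = {{p ! i, p ! Suc i} | i. Suc i < length p}"

text \<open>Coarse k-wiring of (VG,EG) into (VH,EH): a vertex map phi and, for each
  edge uv, a walk from phi u to phi v (the image of the edge, a union of edges),
  such that every vertex of H has at most k preimage vertices and every edge of
  H lies in the images of at most k edges of G.\<close>

definition coarse_wiring ::
  "nat \<Rightarrow> 'a set \<Rightarrow> 'a set set \<Rightarrow> 'b set \<Rightarrow> 'b set set \<Rightarrow> bool" where
  "coarse_wiring k VG EG VH EH \<longleftrightarrow>
    (\<exists>(\<phi> :: 'a \<Rightarrow> 'b) (P :: 'a set \<Rightarrow> 'b list).
       \<phi> ` VG \<subseteq> VH \<and>
       (\<forall>e \<in> EG. is_walk VH EH (P e)) \<and>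
       (\<forall>u v. {u, v} \<in> EG \<longrightarrow>
          (hd (P {u, v}) = \<phi> u \<and> last (P {u, v}) = \<phi> v) \<or>
          (hd (P {u, v}) = \<phi> v \<and> last (P {u, v}) = \<phi> u)) \<and>
       (\<forall>y \<in> VH. card {x \<in> VG. \<phi> x = y} \<le> k) \<and>
       (\<forall>e \<in> EH. card {d \<in> EG. e \<in> walk_edges (P d)} \<le> k))"

end

theory Submission
  imports Defs
begin

text \<open>The ladder \<open>X\<^sub>n\<close> has \<open>f(n) (s f(n) + 1)\<close> vertices
  with \<open>s = 2^2^2n\<close>, while \<open>f(m) \<le> n\<close> and \<open>2^2^(2m+1) \<le> \<surd>s\<close> give
  \<open>|Y\<^sub>m| \<le> 2 n\<^sup>2 \<surd>s \<le> s\<close>. Hence \<open>|X\<^sub>n| > (f(n) - 1) |Y\<^sub>m|\<close>, and by pigeonhole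
  some fibre of any vertex map has at least \<open>f(n)\<close> elements; a coarse wiring
  would bound every fibre by its constant.\<close>

lemma exists_large_fibre:
  assumes "finite A" "finite B" "\<phi> ` A \<subseteq> B" "k * card B < card A"
  shows "\<exists>y \<in> B. k < card {x \<in> A. \<phi> x = y}"
proof (rule ccontr)
  assume "\<not> ?thesis"
  then have small: "\<forall>y \<in> B. card {x \<in> A. \<phi> x = y} \<le> k" by auto
  have "card A = (\<Sum>y\<in>B. card {x \<in> A. \<phi> x = y})"
    using sum.group[OF assms(1-3), of "\<lambda>_. 1::nat"] by simp
  also have "\<dots> \<le> k * card B"
    using sum_bounded_above[of B _ k] small by (simp add: mult.commute)
  finally show False using assms(4) by simp
qed

lemma not_coarse_wiring_if_large_fibres:
  assumes "\<And>\<phi>. \<phi> ` VG \<subseteq> VH \<Longrightarrow> \<exists>y \<in> VH. k < card {x \<in> VG. \<phi> x = y}"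
  shows "\<not> coarse_wiring k VG EG VH EH"
proof
  assume "coarse_wiring k VG EG VH EH"
  then obtain \<phi> where "\<phi> ` VG \<subseteq> VH"
    and small: "\<forall>y \<in> VH. card {x \<in> VG. \<phi> x = y} \<le> k"
    unfolding coarse_wiring_def by blast
  then obtain y where "y \<in> VH" and "k < card {x \<in> VG. \<phi> x = y}"
    using assms by blast
  with small show False by (meson leD)
qed

lemma le_self_if_bounded:
  assumes "f 1 = 1" "\<forall>j \<ge> 2. f j \<le> j" "1 \<le> m"
  shows "f m \<le> (m::nat)"
proof (cases "m = 1")
  case True
  with assms(1) show ?thesis by simp
next
  case False
  with assms(2,3) show ?thesis by simp
qed

lemma finite_ladderV: "finite (ladderV c s)"
  unfolding ladderV_def by simp

lemma card_ladderV: "card (ladderV c s) = c * (s * c + 1)"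
  unfolding ladderV_def by (simp add: card_cartesian_product)

lemma card_ladderV_le:
  assumes "1 \<le> s"
  shows "card (ladderV c s) \<le> 2 * c\<^sup>2 * s"
proof -
  have "c \<le> c * c" by (cases c) auto
  also have "\<dots> \<le> c * c * s" using assms by simp
  finally show ?thesis unfolding card_ladderV by (simp add: power2_eq_square algebra_simps)
qed

lemma two_mul_sq_le_four_pow: "2 * n\<^sup>2 \<le> (4::nat) ^ n"
proof (induction n)
  case 0
  then show ?case by simp
next
  case (Suc n)
  show ?case
  proof (cases "n \<le> 2")
    case True
    then have "n = 0 \<or> n = 1 \<or> n = 2" by auto
    then show ?thesis by (auto simp: power2_eq_square)
  next
    case False
    then have "3 * n \<le> n * n" by (intro mult_le_mono1) simp
    have "2 * (Suc n)\<^sup>2 = 2 * n\<^sup>2 + 4 * n + 2" by (simp add: power2_eq_square)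
    also have "\<dots> \<le> 4 * (2 * n\<^sup>2)"
      using \<open>3 * n \<le> n * n\<close> False unfolding power2_eq_square by linarith
    also have "\<dots> \<le> 4 * 4 ^ n" using Suc.IH by simp
    finally show ?thesis by simp
  qed
qed

text \<open>Both sides are compared with \<open>u = 2^2^(2n-1)\<close>, the square root of the right-hand side.\<close>

lemma ladder_scale_bound:
  fixes m n d :: nat
  assumes "m < n" "d \<le> n"
  shows "2 * d\<^sup>2 * 2 ^ 2 ^ (2 * m + 1) \<le> 2 ^ 2 ^ (2 * n)"
proof -
  define k where "k = 2 * n - 1"
  define u :: nat where "u = 2 ^ 2 ^ k"
  have Suc_k: "2 * n = Suc k" unfolding k_def using assms by simp
  have square: "(2::nat) ^ 2 ^ (2 * n) = u * u"
    unfolding u_def Suc_k by (simp add: power_add[symmetric])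
  have "(2::nat) ^ 2 ^ (2 * m + 1) \<le> u"
    unfolding u_def k_def using assms by (intro power_increasing) auto
  moreover have "2 * d\<^sup>2 \<le> u"
  proof -
    have "2 * n \<le> 2 ^ k" using less_exp[of k] Suc_k by linarith
    then have "(2::nat) ^ (2 * n) \<le> u"
      unfolding u_def by (intro power_increasing) auto
    moreover have "(4::nat) ^ n = 2 ^ (2 * n)" by (simp add: power_mult)
    moreover have "2 * d\<^sup>2 \<le> 2 * n\<^sup>2" using assms by (simp add: power_mono)
    ultimately show ?thesis using two_mul_sq_le_four_pow[of n] by linarith
  qed
  ultimately show ?thesis unfolding square by (intro mult_mono) auto
qed

lemma card_YV_le_scale:
  assumes "m < n" "f m \<le> n"
  shows "card (YV f m) \<le> 2 ^ 2 ^ (2 * n)"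
proof -
  have "card (YV f m) \<le> 2 * (f m)\<^sup>2 * 2 ^ 2 ^ (2 * m + 1)"
    unfolding YV_def by (rule card_ladderV_le) simp
  also have "\<dots> \<le> 2 ^ 2 ^ (2 * n)"
    by (rule ladder_scale_bound[OF assms])
  finally show ?thesis .
qed

lemma card_ladderV_gt:
  assumes "1 \<le> c" "b \<le> s"
  shows "(c - 1) * b < card (ladderV c s)"
proof -
  have "(c - 1) * b \<le> c * s" using assms by (intro mult_mono) auto
  also have "\<dots> \<le> c * (s * c)" using assms by simp
  also have "\<dots> < c * (s * c + 1)" using assms by simp
  finally show ?thesis unfolding card_ladderV .
qed

theorem mainTheorem3:
  fixes f :: "nat \<Rightarrow> nat" and n m :: nat
  assumes f_surj: "\<forall>k \<ge> 1. \<exists>j \<ge> 1. f j = k"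
    and f_one: "f 1 = 1"
    and f_bounds: "\<forall>j \<ge> 2. 2 \<le> f j \<and> f j \<le> j"
    and f_fibres: "\<forall>k \<ge> 2. infinite {j. j \<ge> 1 \<and> f j = k}"
    and n_ge: "n \<ge> 2" and m_ge: "m \<ge> 1" and mn: "m < n"
  shows "(\<forall>\<phi> :: nat \<times> nat \<Rightarrow> nat \<times> nat. \<phi> ` XV f n \<subseteq> YV f m \<longrightarrow>
            (\<exists>y \<in> YV f m. f n \<le> card {x \<in> XV f n. \<phi> x = y}))
         \<and> \<not> coarse_wiring (f n - 1) (XV f n) (XE f n) (YV f m) (YE f m)"
proof -
  have "2 \<le> f n" using f_bounds n_ge by blast
  then obtain k where k: "f n = Suc k" by (cases "f n") auto
  have "\<forall>j \<ge> 2. f j \<le> j" using f_bounds by blast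
  then have "f m \<le> m" by (rule le_self_if_bounded[of f m, OF f_one _ m_ge])
  then have "card (YV f m) \<le> 2 ^ 2 ^ (2 * n)"
    using mn by (intro card_YV_le_scale) auto
  then have gap: "k * card (YV f m) < card (XV f n)"
    using card_ladderV_gt[of "f n"] unfolding XV_def k by simp
  have large_fibre: "\<exists>y \<in> YV f m. k < card {x \<in> XV f n. \<phi> x = y}"
    if "\<phi> ` XV f n \<subseteq> YV f m" for \<phi> :: "nat \<times> nat \<Rightarrow> nat \<times> nat"
    using exists_large_fibre[OF _ _ that gap] finite_ladderV unfolding XV_def YV_def by blast
  then show ?thesis
    unfolding k by (simp add: Suc_le_eq not_coarse_wiring_if_large_fibres)
qed

end
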